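(* Let $G$ be a graph with $n$ vertices, $m\geq 1$ edges and $t(G)$ triangles. Then \[ \mu_n(G)\leq \frac{3n^3\,t(G)-4m^3}{nm(n^2-2m)}, \] with equality if and only if $G$ is a regular complete multipartite graph, i.e. a complete $k$-partite graph for some $k\geq 2$ with all $k$ parts of equal size.
   Context: All graphs are finite, simple and undirected. $t(G)$ is the number of triangles in $G$. For a graph $G$ of order $n$, the eigenvalues of its adjacency matrix $A(G)$ are $\mu_1(G)\geq\dots\geq\mu_n(G)$; $\mu_n(G)$ is the smallest adjacency eigenvalue. *)

theory Defs
  imports "Jordan_Normal_Form.Char_Poly"
begin

definition simple_graph :: "nat \<Rightarrow> nat set set \<Rightarrow> bool" where
  "simple_graph n Eg \<longleftrightarrow> (\<forall>e\<in>Eg. e \<subseteq> {0..<n} \<and> card e = 2)"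

definition adj_matrix :: "nat \<Rightarrow> nat set set \<Rightarrow> real mat" where
  "adj_matrix n Eg = mat n n (\<lambda>(i, j). if {i, j} \<in> Eg then 1 else 0)"

text \<open>Smallest adjacency eigenvalue (the adjacency matrix is real symmetric,
  so all its eigenvalues are real).\<close>
definition min_eigenvalue :: "nat \<Rightarrow> nat set set \<Rightarrow> real" where
  "min_eigenvalue n Eg = Min {\<mu>. eigenvalue (adj_matrix n Eg) \<mu>}"

definition num_triangles :: "nat \<Rightarrow> nat set set \<Rightarrow> nat" where
  "num_triangles n Eg = card {T. T \<subseteq> {0..<n} \<and> card T = 3 \<and>
      (\<forall>x\<in>T. \<forall>y\<in>T. x \<noteq> y \<longrightarrow> {x, y} \<in> Eg)}"

definition regular_complete_multipartite :: "nat \<Rightarrow> nat set set \<Rightarrow> bool" where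
  "regular_complete_multipartite n Eg \<longleftrightarrow>
     (\<exists>k s (c::nat \<Rightarrow> nat). k \<ge> 2 \<and> s \<ge> 1 \<and> (\<forall>x<n. c x < k) \<and>
        (\<forall>i<k. card {x. x < n \<and> c x = i} = s) \<and>
        (\<forall>x<n. \<forall>y<n. x \<noteq> y \<longrightarrow> ({x, y} \<in> Eg \<longleftrightarrow> c x \<noteq> c y)))"

end

theory Submission
  imports Defs "HOL-Analysis.Analysis"
begin

text \<open>
  Let A be the adjacency matrix, d = A 1 its degree vector, M = 2m the sum of the degrees and
  mu the least eigenvalue of A, so that x' A x >= mu |x|^2 for all x. For the centred columns
  y_j = a_j - d/n of A and the degree deviation e = d - (M/n) 1, expanding both sides gives
    tr A^3 - mu (M - M^2/n^2) - M^3/n^3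
      = sum_j (y_j' A y_j - mu |y_j|^2) + (e' A e - mu |e|^2)/n + (2M/n^2) |e|^2.
  The right-hand side is non-negative, and since tr A^3 = 6t the left-hand side equals
  2m (n^2 - 2m)/n^2 times the difference between the claimed bound and mu.

  In the case of equality e = 0, so G is r-regular, and every y_j minimises the Rayleigh
  quotient, hence is an eigenvector for mu; thus A^2 = mu A + c J. On the diagonal c = r, so
  non-adjacent vertices have r common neighbours and therefore equal neighbourhoods: G is
  complete multipartite with all parts of size n - r. Conversely, a regular complete
  multipartite graph with parts of size s satisfies A^2 = (n - s) J - s A, so its eigenvalues
  lie in {n - s, 0, -s}, the least one is -s, and the left-hand side above vanishes for mu = -s.
\<close>

section \<open>Quadratic forms and the Rayleigh quotient\<close>

definition quad_form :: "nat \<Rightarrow> (nat \<Rightarrow> nat \<Rightarrow> real) \<Rightarrow> (nat \<Rightarrow> real) \<Rightarrow> real" where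
  "quad_form n a x = (\<Sum>i<n. \<Sum>j<n. a i j * x i * x j)"

definition sqnorm :: "nat \<Rightarrow> (nat \<Rightarrow> real) \<Rightarrow> real" where
  "sqnorm n x = (\<Sum>i<n. (x i)\<^sup>2)"

lemma sqnorm_eq_0_iff: "sqnorm n x = 0 \<longleftrightarrow> (\<forall>i<n. x i = 0)"
  unfolding sqnorm_def by (auto simp: sum_nonneg_eq_0_iff)

lemma sqnorm_nonneg: "0 \<le> sqnorm n x"
  unfolding sqnorm_def by (simp add: sum_nonneg)

lemma sqnorm_scale: "sqnorm n (\<lambda>i. c * x i) = c\<^sup>2 * sqnorm n x"
  unfolding sqnorm_def by (simp add: power_mult_distrib sum_distrib_left)

lemma quad_form_scale: "quad_form n a (\<lambda>i. c * x i) = c\<^sup>2 * quad_form n a x"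
  unfolding quad_form_def by (simp add: sum_distrib_left power2_eq_square algebra_simps)

lemma quad_form_eigenvector:
  assumes "\<And>i. i < n \<Longrightarrow> (\<Sum>j<n. a i j * x j) = \<mu> * x i"
  shows "quad_form n a x = \<mu> * sqnorm n x"
proof -
  have "quad_form n a x = (\<Sum>i<n. x i * (\<Sum>j<n. a i j * x j))"
    unfolding quad_form_def by (simp add: sum_distrib_left algebra_simps)
  also have "\<dots> = (\<Sum>i<n. \<mu> * (x i)\<^sup>2)"
    using assms by (intro sum.cong refl) (simp add: power2_eq_square)
  finally show ?thesis
    unfolding sqnorm_def by (simp add: sum_distrib_left)
qed

lemma quad_form_perturb:
  assumes sym: "\<And>i j. a i j = a j i" and "i < n"
  shows "quad_form n a (\<lambda>k. x k + (if k = i then t else 0)) =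
    quad_form n a x + 2 * t * (\<Sum>j<n. a i j * x j) + t\<^sup>2 * a i i"
proof -
  let ?y = "\<lambda>k. if k = i then t else 0"
  have "quad_form n a (\<lambda>k. x k + ?y k) = quad_form n a x
      + (\<Sum>k<n. \<Sum>j<n. a k j * x k * ?y j) + (\<Sum>k<n. \<Sum>j<n. a k j * ?y k * x j) + quad_form n a ?y"
    unfolding quad_form_def sum.distrib[symmetric] by (intro sum.cong refl) (simp add: algebra_simps)
  also have "(\<Sum>k<n. \<Sum>j<n. a k j * x k * ?y j) = t * (\<Sum>j<n. a i j * x j)"
    using \<open>i < n\<close> by (simp add: if_distrib[of "times _"] sum_distrib_left sym[of _ i] mult_ac cong: if_cong)
  also have "(\<Sum>k<n. \<Sum>j<n. a k j * ?y k * x j) = t * (\<Sum>j<n. a i j * x j)"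
    using \<open>i < n\<close> by (subst sum.swap) (simp add: if_distrib[of "times _"] sum_distrib_left mult_ac cong: if_cong)
  also have "quad_form n a ?y = t\<^sup>2 * a i i"
    using \<open>i < n\<close> unfolding quad_form_def by (subst sum.swap) (simp add: if_distrib[of "times _"] power2_eq_square mult_ac cong: if_cong)
  finally show ?thesis by simp
qed

lemma sqnorm_perturb:
  assumes "i < n"
  shows "sqnorm n (\<lambda>k. x k + (if k = i then t else 0)) = sqnorm n x + 2 * t * x i + t\<^sup>2"
proof -
  have "sqnorm n (\<lambda>k. x k + (if k = i then t else 0)) =
      sqnorm n x + (\<Sum>k<n. if k = i then 2 * t * x i + t\<^sup>2 else 0)"
    unfolding sqnorm_def sum.distrib[symmetric] by (intro sum.cong refl) (simp add: power2_eq_square algebra_simps)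
  then show ?thesis using assms by simp
qed

lemma linear_coeff_eq_0_if_nonneg_quadratic:
  fixes w c :: real
  assumes "\<And>t. 0 \<le> t * w + t\<^sup>2 * c"
  shows "w = 0"
proof (rule ccontr)
  assume "w \<noteq> 0"
  define s where "s = \<bar>c\<bar> + 1"
  have "0 < s" "c < s"
    unfolding s_def by auto
  have "(- w / s * w + (- w / s)\<^sup>2 * c) * s\<^sup>2 = w\<^sup>2 * (c - s)"
    using \<open>0 < s\<close> by (simp add: field_simps power2_eq_square)
  also have "\<dots> < 0"
    using \<open>w \<noteq> 0\<close> \<open>c < s\<close> by (simp add: mult_pos_neg)
  finally show False
    using assms[of "- w / s"] \<open>0 < s\<close> by (simp add: mult_less_0_iff)
qed

lemma rayleigh_minimizer_is_eigenvector:
  assumes sym: "\<And>i j. a i j = a j i"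
    and bound: "\<And>x. \<mu> * sqnorm n x \<le> quad_form n a x"
    and attained: "quad_form n a v = \<mu> * sqnorm n v"
    and "i < n"
  shows "(\<Sum>j<n. a i j * v j) = \<mu> * v i"
proof -
  have "0 \<le> t * (2 * ((\<Sum>j<n. a i j * v j) - \<mu> * v i)) + t\<^sup>2 * (a i i - \<mu>)" for t
    using bound[of "\<lambda>k. v k + (if k = i then t else 0)"] attained
    unfolding quad_form_perturb[OF sym \<open>i < n\<close>] sqnorm_perturb[OF \<open>i < n\<close>]
    by (simp add: algebra_simps)
  then show ?thesis
    using linear_coeff_eq_0_if_nonneg_quadratic by fastforce
qed
lemma abs_le_1_if_sqnorm_eq_1:
  assumes "sqnorm n x = 1" "i < n"
  shows "\<bar>x i\<bar> \<le> 1"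
proof -
  have "(x i)\<^sup>2 \<le> 1"
    using member_le_sum[of i "{..<n}" "\<lambda>i. (x i)\<^sup>2"] assms unfolding sqnorm_def by simp
  then show ?thesis
    using abs_le_square_iff[of "x i" 1] by simp
qed

lemma compactin_unit_sphere:
  "compactin (product_topology (\<lambda>_. euclideanreal) {..<n}) {x \<in> PiE {..<n} (\<lambda>_. UNIV). sqnorm n x = 1}"
proof -
  let ?X = "product_topology (\<lambda>_. euclideanreal) {..<n}"
  have "continuous_map ?X euclideanreal (sqnorm n)"
    unfolding sqnorm_def power2_eq_square
    by (intro continuous_map_sum continuous_map_real_mult continuous_map_product_projection) auto
  then have "closedin ?X {x \<in> topspace ?X. sqnorm n x \<in> {1}}"
    by (rule closedin_continuous_map_preimage) auto
  moreover have "compactin ?X (PiE {..<n} (\<lambda>_. {-1..1::real}))"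
    by (subst compactin_PiE) (auto simp: compactin_euclidean_iff)
  ultimately have "compactin ?X ({x \<in> topspace ?X. sqnorm n x \<in> {1}} \<inter> PiE {..<n} (\<lambda>_. {-1..1}))"
    by (rule closed_Int_compactin)
  also have "{x \<in> topspace ?X. sqnorm n x \<in> {1}} \<inter> PiE {..<n} (\<lambda>_. {-1..1}) =
      {x \<in> PiE {..<n} (\<lambda>_. UNIV). sqnorm n x = 1}"
    using abs_le_1_if_sqnorm_eq_1 by (auto simp: abs_le_iff PiE_iff extensional_def)
  finally show ?thesis .
qed

lemma quad_form_attains_min_on_sphere:
  assumes "0 < n"
  obtains v where "sqnorm n v = 1" "\<And>x. sqnorm n x = 1 \<Longrightarrow> quad_form n a v \<le> quad_form n a x"
proof -
  let ?X = "product_topology (\<lambda>_. euclideanreal) {..<n}"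
  let ?S = "{x \<in> PiE {..<n} (\<lambda>_. UNIV). sqnorm n x = 1}"
  have "continuous_map ?X euclideanreal (quad_form n a)"
    unfolding quad_form_def
    by (intro continuous_map_sum continuous_map_real_mult continuous_map_real_mult_left
        continuous_map_product_projection) auto
  then have "compactin euclideanreal (quad_form n a ` ?S)"
    by (rule image_compactin[OF compactin_unit_sphere])
  then have "compact (quad_form n a ` ?S)"
    by (simp add: compactin_euclidean_iff)
  moreover have "restrict (\<lambda>i. if i = 0 then 1 else 0) {..<n} \<in> ?S"
    using assms unfolding sqnorm_def by (simp add: if_distrib[of "\<lambda>z. z\<^sup>2"] cong: if_cong)
  then have "quad_form n a ` ?S \<noteq> {}"
    by blast
  ultimately have "\<exists>q \<in> quad_form n a ` ?S. \<forall>y \<in> quad_form n a ` ?S. q \<le> y"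
    by (rule compact_attains_inf)
  then obtain q where q: "q \<in> quad_form n a ` ?S" "\<forall>y \<in> quad_form n a ` ?S. q \<le> y"
    by blast
  from q(1) obtain v where v: "v \<in> ?S" "q = quad_form n a v"
    by (rule imageE)
  show ?thesis
  proof
    show "sqnorm n v = 1"
      using v(1) by simp
    fix x assume "sqnorm n x = 1"
    then have "restrict x {..<n} \<in> ?S"
      by (simp add: sqnorm_def)
    then have "quad_form n a v \<le> quad_form n a (restrict x {..<n})"
      using bspec[OF q(2) imageI] v(2) by simp
    also have "quad_form n a (restrict x {..<n}) = quad_form n a x"
      unfolding quad_form_def by simp
    finally show "quad_form n a v \<le> quad_form n a x" .
  qed
qed

lemma sphere_minimum_le_quad_form:
  assumes v: "sqnorm n v = 1" "\<And>x. sqnorm n x = 1 \<Longrightarrow> quad_form n a v \<le> quad_form n a x"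
  shows "quad_form n a v * sqnorm n x \<le> quad_form n a x"
proof (cases "sqnorm n x = 0")
  case True
  then show ?thesis
    using sqnorm_eq_0_iff[of n x] by (simp add: quad_form_def)
next
  case False
  define c where "c = 1 / sqrt (sqnorm n x)"
  have c2: "c\<^sup>2 * sqnorm n x = 1"
    using False sqnorm_nonneg[of n x] unfolding c_def by (simp add: power_divide)
  then have "quad_form n a v \<le> c\<^sup>2 * quad_form n a x"
    using v(2)[of "\<lambda>i. c * x i"] by (simp add: sqnorm_scale quad_form_scale)
  then have "quad_form n a v * sqnorm n x \<le> c\<^sup>2 * quad_form n a x * sqnorm n x"
    using sqnorm_nonneg[of n x] by (simp add: mult_right_mono)
  also have "\<dots> = quad_form n a x"
    using c2 by (simp add: algebra_simps)
  finally show ?thesis .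
qed

section \<open>Eigenvalues of square matrices\<close>

lemma eigenvalue_mat_iff:
  "eigenvalue (Matrix.mat n n (\<lambda>(i, j). a i j)) \<mu> \<longleftrightarrow>
    (\<exists>x. (\<exists>i<n. x i \<noteq> 0) \<and> (\<forall>i<n. (\<Sum>j<n. a i j * x j) = \<mu> * x i))"
proof -
  have mult: "(Matrix.mat n n (\<lambda>(i, j). a i j) *\<^sub>v v) $ i = (\<Sum>j<n. a i j * v $ j)"
    if "v \<in> carrier_vec n" "i < n" for v i
    using that by (simp add: scalar_prod_def lessThan_atLeast0)
  show ?thesis
  proof
    assume "eigenvalue (Matrix.mat n n (\<lambda>(i, j). a i j)) \<mu>"
    then obtain v where v: "v \<in> carrier_vec n" "v \<noteq> 0\<^sub>v n"
      "Matrix.mat n n (\<lambda>(i, j). a i j) *\<^sub>v v = \<mu> \<cdot>\<^sub>v v"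
      unfolding eigenvalue_def eigenvector_def by auto
    have "\<exists>i<n. v $ i \<noteq> 0"
      using v(1,2) by (metis carrier_vecD eq_vecI index_zero_vec(1,2))
    moreover have "(\<Sum>j<n. a i j * v $ j) = \<mu> * v $ i" if "i < n" for i
      using mult[OF v(1) that] v(1,3) that by (metis carrier_vecD index_smult_vec(1))
    ultimately show "\<exists>x. (\<exists>i<n. x i \<noteq> 0) \<and> (\<forall>i<n. (\<Sum>j<n. a i j * x j) = \<mu> * x i)"
      by blast
  next
    assume "\<exists>x. (\<exists>i<n. x i \<noteq> 0) \<and> (\<forall>i<n. (\<Sum>j<n. a i j * x j) = \<mu> * x i)"
    then obtain x where x: "\<exists>i<n. x i \<noteq> 0" "\<forall>i<n. (\<Sum>j<n. a i j * x j) = \<mu> * x i"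
      by blast
    have "Matrix.vec n x \<noteq> 0\<^sub>v n"
      using x(1) by (metis index_vec index_zero_vec(1))
    moreover have "Matrix.mat n n (\<lambda>(i, j). a i j) *\<^sub>v Matrix.vec n x = \<mu> \<cdot>\<^sub>v Matrix.vec n x"
      using x(2) mult[of "Matrix.vec n x"] by (intro eq_vecI) auto
    ultimately show "eigenvalue (Matrix.mat n n (\<lambda>(i, j). a i j)) \<mu>"
      unfolding eigenvalue_def eigenvector_def by (intro exI[of _ "Matrix.vec n x"]) auto
  qed
qed

lemma finite_eigenvalues:
  assumes "(A :: 'a :: field mat) \<in> carrier_mat n n"
  shows "finite {\<mu>. eigenvalue A \<mu>}"
proof -
  have "char_poly A \<noteq> 0"
    using degree_monic_char_poly[OF assms] by auto
  then show ?thesis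
    using poly_roots_finite eigenvalue_root_char_poly[OF assms] by simp
qed

lemma rayleigh_bound_Min_eigenvalue:
  assumes sym: "\<And>i j. a i j = a j i" and "0 < n"
  shows "Min {\<mu>. eigenvalue (Matrix.mat n n (\<lambda>(i, j). a i j)) \<mu>} * sqnorm n x \<le> quad_form n a x"
proof -
  obtain v where v: "sqnorm n v = 1" "\<And>x. sqnorm n x = 1 \<Longrightarrow> quad_form n a v \<le> quad_form n a x"
    using quad_form_attains_min_on_sphere[OF \<open>0 < n\<close>] by blast
  define \<mu> where "\<mu> = quad_form n a v"
  have bound: "\<mu> * sqnorm n y \<le> quad_form n a y" for y
    unfolding \<mu>_def using sphere_minimum_le_quad_form[OF v] .
  have "\<exists>i<n. v i \<noteq> 0"
    using v(1) sqnorm_eq_0_iff[of n v] by auto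
  moreover have "\<forall>i<n. (\<Sum>j<n. a i j * v j) = \<mu> * v i"
    using rayleigh_minimizer_is_eigenvector[OF sym bound] v(1) unfolding \<mu>_def by simp
  ultimately have "eigenvalue (Matrix.mat n n (\<lambda>(i, j). a i j)) \<mu>"
    unfolding eigenvalue_mat_iff by blast
  moreover have "\<mu> \<le> \<nu>" if ev: "eigenvalue (Matrix.mat n n (\<lambda>(i, j). a i j)) \<nu>" for \<nu>
  proof -
    obtain y where y: "\<exists>i<n. y i \<noteq> 0" "\<forall>i<n. (\<Sum>j<n. a i j * y j) = \<nu> * y i"
      using ev unfolding eigenvalue_mat_iff by blast
    have "\<mu> * sqnorm n y \<le> \<nu> * sqnorm n y"
      using bound[of y] quad_form_eigenvector[of n a y \<nu>] y(2) by simp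
    moreover have "0 < sqnorm n y"
      using y(1) sqnorm_eq_0_iff[of n y] sqnorm_nonneg[of n y] by auto
    ultimately show ?thesis by simp
  qed
  ultimately have "Min {\<mu>. eigenvalue (Matrix.mat n n (\<lambda>(i, j). a i j)) \<mu>} = \<mu>"
    using finite_eigenvalues[of "Matrix.mat n n (\<lambda>(i, j). a i j)" n] by (intro Min_eqI) auto
  then show ?thesis using bound by simp
qed

section \<open>An identity for symmetric 0-1 matrices\<close>

locale sym_01_matrix =
  fixes n :: nat and a :: "nat \<Rightarrow> nat \<Rightarrow> real"
  assumes sym: "a i j = a j i"
    and zero_one: "a i j * a i j = a i j"
    and n_pos: "0 < n"
begin

definition degree :: "nat \<Rightarrow> real" where
  "degree i = (\<Sum>j<n. a i j)"

definition deg_sum :: real where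
  "deg_sum = (\<Sum>i<n. degree i)"

definition trace_cube :: real where
  "trace_cube = (\<Sum>i<n. \<Sum>j<n. \<Sum>k<n. a i j * a i k * a j k)"

definition centered_col :: "nat \<Rightarrow> nat \<Rightarrow> real" where
  "centered_col j i = a i j - degree i / n"

definition degree_dev :: "nat \<Rightarrow> real" where
  "degree_dev i = degree i - deg_sum / n"

text \<open>For a graph with m edges, defect mu equals 2m (n^2 - 2m)/n^2 times the difference
  between the bound of the theorem and mu.\<close>
definition defect :: "real \<Rightarrow> real" where
  "defect \<mu> = trace_cube - \<mu> * (deg_sum - deg_sum\<^sup>2 / n\<^sup>2) - deg_sum ^ 3 / n ^ 3"

lemma nonneg: "0 \<le> a i j"
  by (metis zero_le_square zero_one)

lemma deg_sum_nonneg: "0 \<le> deg_sum"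
  unfolding deg_sum_def degree_def by (simp add: sum_nonneg nonneg)

lemma sum_quad_form_centered_col:
  "(\<Sum>j<n. quad_form n a (centered_col j)) = trace_cube - quad_form n a degree / n"
proof -
  have col: "(\<Sum>j<n. a i k * centered_col j i * centered_col j k) =
      a i k * (\<Sum>j<n. a i j * a k j) - a i k * degree i * degree k / n" for i k
  proof -
    have "(\<Sum>j<n. a i k * centered_col j i * centered_col j k) =
        (\<Sum>j<n. a i k * a i j * a k j) - (a i k * degree k / n) * (\<Sum>j<n. a i j)
        - (a i k * degree i / n) * (\<Sum>j<n. a k j) + (\<Sum>j<n. a i k * degree i * degree k / n\<^sup>2)"
      unfolding centered_col_def sum_distrib_left sum_subtractf[symmetric] sum.distrib[symmetric]
      using n_pos by (intro sum.cong refl) (simp add: field_simps power2_eq_square)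
    also have "\<dots> = a i k * (\<Sum>j<n. a i j * a k j) - a i k * degree i * degree k / n"
      using n_pos unfolding degree_def[symmetric]
      by (simp add: sum_distrib_left power2_eq_square field_simps mult.assoc)
    finally show ?thesis .
  qed
  have "(\<Sum>j<n. quad_form n a (centered_col j)) = (\<Sum>i<n. \<Sum>k<n. \<Sum>j<n. a i k * centered_col j i * centered_col j k)"
    unfolding quad_form_def by (subst sum.swap) (subst (2) sum.swap, rule refl)
  also have "\<dots> = (\<Sum>i<n. \<Sum>k<n. a i k * (\<Sum>j<n. a i j * a k j)) - quad_form n a degree / n"
    unfolding col quad_form_def by (simp add: sum_subtractf sum_divide_distrib)
  also have "(\<Sum>i<n. \<Sum>k<n. a i k * (\<Sum>j<n. a i j * a k j)) = trace_cube"
    unfolding trace_cube_def sum_distrib_left by (simp add: mult.assoc)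
  finally show ?thesis .
qed

lemma sum_sqnorm_centered_col:
  "(\<Sum>j<n. sqnorm n (centered_col j)) = deg_sum - sqnorm n degree / n"
proof -
  have row: "(\<Sum>j<n. (centered_col j i)\<^sup>2) = degree i - (degree i)\<^sup>2 / n" for i
  proof -
    have "(\<Sum>j<n. (centered_col j i)\<^sup>2) =
        (\<Sum>j<n. a i j) - 2 * degree i / n * (\<Sum>j<n. a i j) + (\<Sum>j<n. (degree i)\<^sup>2 / n\<^sup>2)"
      unfolding centered_col_def sum_distrib_left sum_subtractf[symmetric] sum.distrib[symmetric]
      by (intro sum.cong refl) (simp add: algebra_simps power2_eq_square zero_one)
    also have "\<dots> = degree i - (degree i)\<^sup>2 / n"
      using n_pos unfolding degree_def[symmetric] by (simp add: power2_eq_square field_simps)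
    finally show ?thesis .
  qed
  have "(\<Sum>j<n. sqnorm n (centered_col j)) = (\<Sum>i<n. \<Sum>j<n. (centered_col j i)\<^sup>2)"
    unfolding sqnorm_def by (rule sum.swap)
  also have "\<dots> = deg_sum - sqnorm n degree / n"
    unfolding row deg_sum_def sqnorm_def by (simp add: sum_subtractf sum_divide_distrib)
  finally show ?thesis .
qed

lemma quad_form_degree_dev:
  "quad_form n a degree_dev =
    quad_form n a degree - 2 * (deg_sum / n) * sqnorm n degree + (deg_sum / n)\<^sup>2 * deg_sum"
proof -
  define c where "c = deg_sum / n"
  have "quad_form n a degree_dev = quad_form n a degree - c * (\<Sum>i<n. \<Sum>k<n. a i k * degree i)
      - c * (\<Sum>i<n. \<Sum>k<n. a i k * degree k) + c\<^sup>2 * (\<Sum>i<n. \<Sum>k<n. a i k)"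
    unfolding quad_form_def degree_dev_def c_def[symmetric] sum_distrib_left
      sum_subtractf[symmetric] sum.distrib[symmetric]
    by (intro sum.cong refl) (simp add: algebra_simps power2_eq_square)
  also have "(\<Sum>i<n. \<Sum>k<n. a i k * degree i) = sqnorm n degree"
    unfolding sqnorm_def power2_eq_square by (simp add: sum_distrib_right[symmetric] degree_def mult.commute)
  also have "(\<Sum>i<n. \<Sum>k<n. a i k * degree k) = sqnorm n degree"
    unfolding sqnorm_def power2_eq_square
    by (subst sum.swap) (simp add: sum_distrib_right[symmetric] degree_def sym mult.commute)
  also have "(\<Sum>i<n. \<Sum>k<n. a i k) = deg_sum"
    unfolding deg_sum_def degree_def ..
  finally show ?thesis
    unfolding c_def by simp
qed

lemma sqnorm_degree_dev: "sqnorm n degree_dev = sqnorm n degree - deg_sum\<^sup>2 / n"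
proof -
  have "sqnorm n degree_dev = sqnorm n degree - 2 * (deg_sum / n) * deg_sum + (\<Sum>i<n. (deg_sum / n)\<^sup>2)"
    unfolding degree_dev_def sqnorm_def deg_sum_def sum_distrib_left
      sum_subtractf[symmetric] sum.distrib[symmetric]
    by (intro sum.cong refl) (simp add: algebra_simps power2_eq_square)
  then show ?thesis
    using n_pos by (simp add: power2_eq_square field_simps)
qed

lemma defect_eq_sum_of_forms:
  "defect \<mu> =
    (\<Sum>j<n. quad_form n a (centered_col j) - \<mu> * sqnorm n (centered_col j))
    + (quad_form n a degree_dev - \<mu> * sqnorm n degree_dev) / n
    + 2 * deg_sum / n\<^sup>2 * sqnorm n degree_dev"
  unfolding defect_def sum_subtractf sum_distrib_left[symmetric] sum_quad_form_centered_col
    sum_sqnorm_centered_col quad_form_degree_dev sqnorm_degree_dev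
  using n_pos by (simp add: field_simps power2_eq_square power3_eq_cube)

lemma defect_terms_nonneg:
  assumes "\<And>x. \<mu> * sqnorm n x \<le> quad_form n a x"
  shows "0 \<le> (\<Sum>j<n. quad_form n a (centered_col j) - \<mu> * sqnorm n (centered_col j))"
    and "0 \<le> (quad_form n a degree_dev - \<mu> * sqnorm n degree_dev) / n"
    and "0 \<le> 2 * deg_sum / n\<^sup>2 * sqnorm n degree_dev"
  using assms deg_sum_nonneg sqnorm_nonneg by (auto intro: sum_nonneg)

lemma defect_nonneg:
  assumes "\<And>x. \<mu> * sqnorm n x \<le> quad_form n a x"
  shows "0 \<le> defect \<mu>"
  using defect_terms_nonneg[OF assms] unfolding defect_eq_sum_of_forms by linarith

lemma defect_eq_0_imp_regular_square:
  assumes bound: "\<And>x. \<mu> * sqnorm n x \<le> quad_form n a x"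
    and "0 < deg_sum" and "defect \<mu> = 0"
  defines "r \<equiv> deg_sum / n"
  shows "\<And>i. i < n \<Longrightarrow> degree i = r"
    and "\<And>i j. i < n \<Longrightarrow> j < n \<Longrightarrow> (\<Sum>k<n. a i k * a k j) = \<mu> * a i j + r * (r - \<mu>) / n"
proof -
  have cols_zero: "(\<Sum>j<n. quad_form n a (centered_col j) - \<mu> * sqnorm n (centered_col j)) = 0"
    and "2 * deg_sum / n\<^sup>2 * sqnorm n degree_dev = 0"
    using defect_terms_nonneg[OF bound] \<open>defect \<mu> = 0\<close> unfolding defect_eq_sum_of_forms by linarith+
  then have "sqnorm n degree_dev = 0"
    using \<open>0 < deg_sum\<close> n_pos by simp
  then show regular: "degree i = r" if "i < n" for i
    using that unfolding sqnorm_eq_0_iff degree_dev_def r_def by simp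
  fix i j assume "i < n" "j < n"
  have "quad_form n a (centered_col j) = \<mu> * sqnorm n (centered_col j)"
    using cols_zero bound \<open>j < n\<close> by (subst (asm) sum_nonneg_eq_0_iff) auto
  then have "(\<Sum>k<n. a i k * centered_col j k) = \<mu> * centered_col j i"
    using rayleigh_minimizer_is_eigenvector[OF sym bound] \<open>i < n\<close> by blast
  moreover have "(\<Sum>k<n. a i k * centered_col j k) = (\<Sum>k<n. a i k * a k j - r / n * a i k)"
    using regular unfolding centered_col_def by (intro sum.cong refl) (simp add: algebra_simps sym[of j])
  then have "(\<Sum>k<n. a i k * centered_col j k) = (\<Sum>k<n. a i k * a k j) - r / n * degree i"
    unfolding degree_def by (simp add: sum_subtractf sum_distrib_left)
  ultimately show "(\<Sum>k<n. a i k * a k j) = \<mu> * a i j + r * (r - \<mu>) / n"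
    using regular \<open>i < n\<close> unfolding centered_col_def by (simp add: field_simps)
qed

lemma defect_eq_0_if_square_relation:
  fixes r s :: real
  assumes regular: "\<And>i. i < n \<Longrightarrow> degree i = r"
    and square: "\<And>i j. i < n \<Longrightarrow> j < n \<Longrightarrow> (\<Sum>k<n. a i k * a k j) = r - s * a i j"
    and "n = r + s"
  shows "defect (- s) = 0"
proof -
  have deg_sum: "deg_sum = n * r"
    unfolding deg_sum_def using regular by simp
  have "trace_cube = (\<Sum>i<n. \<Sum>j<n. a i j * (\<Sum>k<n. a i k * a k j))"
    unfolding trace_cube_def sum_distrib_left by (intro sum.cong refl) (metis mult.assoc sym)
  also have "\<dots> = (\<Sum>i<n. \<Sum>j<n. (r - s) * a i j)"
  proof (intro sum.cong refl)
    fix i j assume "i \<in> {..<n}" "j \<in> {..<n}"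
    then have "a i j * (\<Sum>k<n. a i k * a k j) = a i j * (r - s * a i j)"
      using square by simp
    also have "\<dots> = r * a i j - s * (a i j * a i j)"
      by (simp add: algebra_simps)
    finally show "a i j * (\<Sum>k<n. a i k * a k j) = (r - s) * a i j"
      by (simp add: zero_one left_diff_distrib)
  qed
  also have "\<dots> = (r - s) * deg_sum"
    unfolding deg_sum_def degree_def by (simp add: sum_distrib_left)
  finally have "defect (- s) = (r - s) * (n * r) + s * (n * r - r\<^sup>2) - r ^ 3"
    unfolding defect_def deg_sum using n_pos by (simp add: power_mult_distrib)
  also have "\<dots> = r\<^sup>2 * (n - r - s)"
    by (simp add: algebra_simps power2_eq_square power3_eq_cube)
  finally show ?thesis
    using \<open>n = r + s\<close> by simp
qed

lemma eigenvalue_cases_if_square_relation: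
  fixes r c s :: real
  assumes regular: "\<And>i. i < n \<Longrightarrow> degree i = r"
    and square: "\<And>i j. i < n \<Longrightarrow> j < n \<Longrightarrow> (\<Sum>k<n. a i k * a k j) = c - s * a i j"
    and nonzero: "\<exists>i<n. x i \<noteq> 0" and eigen: "\<And>i. i < n \<Longrightarrow> (\<Sum>j<n. a i j * x j) = \<nu> * x i"
  shows "\<nu> = r \<or> \<nu> = 0 \<or> \<nu> = - s"
proof (cases "(\<Sum>j<n. x j) = 0")
  case False
  have "(\<Sum>i<n. \<Sum>j<n. a i j * x j) = (\<Sum>j<n. degree j * x j)"
    unfolding degree_def sum_distrib_right by (subst sum.swap) (intro sum.cong refl, metis sym)
  then have "r * (\<Sum>j<n. x j) = \<nu> * (\<Sum>j<n. x j)"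
    using regular eigen by (simp add: sum_distrib_left)
  then show ?thesis
    using False by simp
next
  case True
  obtain i where "i < n" "x i \<noteq> 0"
    using nonzero by blast
  have "\<nu> * (\<nu> * x i) = (\<Sum>k<n. a i k * (\<Sum>j<n. a k j * x j))"
    using eigen \<open>i < n\<close> by (simp add: sum_distrib_left[symmetric] mult.left_commute)
  also have "\<dots> = (\<Sum>j<n. (\<Sum>k<n. a i k * a k j) * x j)"
    by (simp add: sum_distrib_left sum_distrib_right mult.assoc) (rule sum.swap)
  also have "\<dots> = c * (\<Sum>j<n. x j) - s * (\<Sum>j<n. a i j * x j)"
    using square \<open>i < n\<close> by (simp add: left_diff_distrib sum_subtractf sum_distrib_left mult.assoc)
  also have "\<dots> = - s * (\<nu> * x i)"
    using True eigen \<open>i < n\<close> by simp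
  finally have "\<nu> * (\<nu> + s) * x i = 0"
    by (simp add: algebra_simps)
  then have "\<nu> * (\<nu> + s) = 0"
    using \<open>x i \<noteq> 0\<close> by simp
  then show ?thesis
    by (auto simp: add_eq_0_iff)
qed

end

section \<open>Counting edges and triangles\<close>

definition adj :: "nat set set \<Rightarrow> nat \<Rightarrow> nat \<Rightarrow> real" where
  "adj E i j = of_bool ({i, j} \<in> E)"

lemma adj_sym: "adj E i j = adj E j i"
  by (simp add: adj_def insert_commute)

lemma adj_matrix_eq_mat_adj: "adj_matrix n E = Matrix.mat n n (\<lambda>(i, j). adj E i j)"
  unfolding adj_matrix_def adj_def of_bool_def ..

lemma simple_graph_edgeD:
  assumes "simple_graph n E" "{i, j} \<in> E"
  shows "i < n" "j < n" "i \<noteq> j"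
  using assms unfolding simple_graph_def by fastforce+

lemma sum_of_bool_mem_eq_card:
  assumes "finite A" "P \<subseteq> A"
  shows "(\<Sum>p\<in>A. of_bool (p \<in> P)) = real (card P)"
proof -
  have "(\<Sum>p\<in>A. of_bool (p \<in> P)) = real (card (A \<inter> {p. p \<in> P}))"
    using assms(1) by simp
  also have "A \<inter> {p. p \<in> P} = P"
    using assms(2) by blast
  finally show ?thesis .
qed

lemma card_eq_mult_if_uniform_fibres:
  assumes "finite S" "finite T" "g ` S \<subseteq> T" "\<And>t. t \<in> T \<Longrightarrow> card {x \<in> S. g x = t} = c"
  shows "card S = c * card T"
proof -
  have "card S = (\<Sum>t\<in>T. card {x \<in> S. g x = t})"
    using sum.group[OF assms(1-3), of "\<lambda>_. 1::nat"] by simp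
  then show ?thesis
    using assms(4) by simp
qed

lemma card_ordered_pairs:
  assumes "u \<noteq> v"
  shows "card {(i, j). {i, j} = {u, v}} = 2"
proof -
  have "{(i, j). {i, j} = {u, v}} = {(u, v), (v, u)}"
    by (auto simp: doubleton_eq_iff)
  then show ?thesis
    using assms by simp
qed

lemma card_ordered_triples:
  assumes "u \<noteq> v" "u \<noteq> w" "v \<noteq> w"
  shows "card {(i, j, k). {i, j, k} = {u, v, w} \<and> i \<noteq> j \<and> i \<noteq> k \<and> j \<noteq> k} = 6"
proof -
  have "{(i, j, k). {i, j, k} = {u, v, w} \<and> i \<noteq> j \<and> i \<noteq> k \<and> j \<noteq> k} =
      {(u, v, w), (u, w, v), (v, u, w), (v, w, u), (w, u, v), (w, v, u)}"
  proof (intro Set.set_eqI iffI)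
    fix p assume "p \<in> {(i, j, k). {i, j, k} = {u, v, w} \<and> i \<noteq> j \<and> i \<noteq> k \<and> j \<noteq> k}"
    then obtain i j k where "p = (i, j, k)" "{i, j, k} = {u, v, w}" "i \<noteq> j" "i \<noteq> k" "j \<noteq> k"
      by auto
    then show "p \<in> {(u, v, w), (u, w, v), (v, u, w), (v, w, u), (w, u, v), (w, v, u)}"
      by (simp add: set_eq_iff) metis
  qed (use assms in auto)
  then show ?thesis
    using assms by simp
qed

context
  fixes n :: nat and E :: "nat set set"
  assumes simple: "simple_graph n E"
begin

lemma finite_edges: "finite E"
  by (rule finite_subset[of E "Pow {0..<n}"]) (use simple in \<open>auto simp: simple_graph_def\<close>)

lemma card_ordered_edges: "card {(i, j). {i, j} \<in> E} = 2 * card E"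
proof (rule card_eq_mult_if_uniform_fibres[where g = "\<lambda>(i, j). {i, j}"])
  show "finite {(i, j). {i, j} \<in> E}"
    by (rule finite_subset[of _ "{..<n} \<times> {..<n}"]) (use simple_graph_edgeD[OF simple] in auto)
  fix e assume "e \<in> E"
  then obtain u v where "e = {u, v}" "u \<noteq> v"
    using simple unfolding simple_graph_def by (auto simp: card_2_iff)
  then have "{p \<in> {(i, j). {i, j} \<in> E}. (\<lambda>(i, j). {i, j}) p = e} = {(i, j). {i, j} = {u, v}}"
    using \<open>e \<in> E\<close> by auto
  then show "card {p \<in> {(i, j). {i, j} \<in> E}. (\<lambda>(i, j). {i, j}) p = e} = 2"
    using card_ordered_pairs[OF \<open>u \<noteq> v\<close>] by simp
qed (use finite_edges in auto)

lemma sum_adj_eq_twice_card_edges: "(\<Sum>i<n. \<Sum>j<n. adj E i j) = 2 * real (card E)"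
proof -
  have "(\<Sum>i<n. \<Sum>j<n. adj E i j) = (\<Sum>p\<in>{..<n} \<times> {..<n}. of_bool (p \<in> {(i, j). {i, j} \<in> E}))"
    unfolding adj_def sum.cartesian_product by (simp add: case_prod_beta)
  also have "\<dots> = real (card {(i, j). {i, j} \<in> E})"
    using simple_graph_edgeD[OF simple] by (intro sum_of_bool_mem_eq_card) auto
  finally show ?thesis
    by (simp add: card_ordered_edges)
qed

lemma ordered_triangles_on:
  assumes "\<forall>x\<in>T. \<forall>y\<in>T. x \<noteq> y \<longrightarrow> {x, y} \<in> E"
  shows "{p \<in> {(i, j, k). {i, j} \<in> E \<and> {i, k} \<in> E \<and> {j, k} \<in> E}. (\<lambda>(i, j, k). {i, j, k}) p = T} =
    {(i, j, k). {i, j, k} = T \<and> i \<noteq> j \<and> i \<noteq> k \<and> j \<noteq> k}"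
proof (intro Set.set_eqI iffI)
  fix p assume "p \<in> {p \<in> {(i, j, k). {i, j} \<in> E \<and> {i, k} \<in> E \<and> {j, k} \<in> E}. (\<lambda>(i, j, k). {i, j, k}) p = T}"
  then obtain i j k where "p = (i, j, k)" "{i, j, k} = T" "{i, j} \<in> E" "{i, k} \<in> E" "{j, k} \<in> E"
    by auto
  moreover have "i \<noteq> j" "i \<noteq> k" "j \<noteq> k"
    using simple_graph_edgeD(3)[OF simple] calculation(3-5) by blast+
  ultimately show "p \<in> {(i, j, k). {i, j, k} = T \<and> i \<noteq> j \<and> i \<noteq> k \<and> j \<noteq> k}"
    by auto
next
  fix p assume "p \<in> {(i, j, k). {i, j, k} = T \<and> i \<noteq> j \<and> i \<noteq> k \<and> j \<noteq> k}"
  then obtain i j k where "p = (i, j, k)" "{i, j, k} = T" "i \<noteq> j" "i \<noteq> k" "j \<noteq> k"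
    by auto
  then show "p \<in> {p \<in> {(i, j, k). {i, j} \<in> E \<and> {i, k} \<in> E \<and> {j, k} \<in> E}. (\<lambda>(i, j, k). {i, j, k}) p = T}"
    using assms by auto
qed

lemma card_ordered_triangles:
  "card {(i, j, k). {i, j} \<in> E \<and> {i, k} \<in> E \<and> {j, k} \<in> E} = 6 * num_triangles n E"
  unfolding num_triangles_def
proof (rule card_eq_mult_if_uniform_fibres[where g = "\<lambda>(i, j, k). {i, j, k}"])
  let ?P = "{(i, j, k). {i, j} \<in> E \<and> {i, k} \<in> E \<and> {j, k} \<in> E}"
  let ?T = "{T. T \<subseteq> {0..<n} \<and> card T = 3 \<and> (\<forall>x\<in>T. \<forall>y\<in>T. x \<noteq> y \<longrightarrow> {x, y} \<in> E)}"
  show "finite ?P"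
    by (rule finite_subset[of _ "{..<n} \<times> {..<n} \<times> {..<n}"]) (use simple_graph_edgeD[OF simple] in auto)
  show "finite ?T"
    by (rule finite_subset[of _ "Pow {0..<n}"]) auto
  show "(\<lambda>(i, j, k). {i, j, k}) ` ?P \<subseteq> ?T"
  proof
    fix T assume "T \<in> (\<lambda>(i, j, k). {i, j, k}) ` ?P"
    then obtain i j k where T: "T = {i, j, k}" and edges: "{i, j} \<in> E" "{i, k} \<in> E" "{j, k} \<in> E"
      by auto
    then have "i < n" "j < n" "k < n" "i \<noteq> j" "i \<noteq> k" "j \<noteq> k"
      using simple_graph_edgeD[OF simple] by blast+
    then show "T \<in> ?T"
      using edges unfolding T by (auto simp: insert_commute)
  qed
  fix T assume "T \<in> ?T"
  then obtain u v w where T: "T = {u, v, w}" "u \<noteq> v" "u \<noteq> w" "v \<noteq> w"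
    by (auto simp: card_3_iff)
  have "{p \<in> ?P. (\<lambda>(i, j, k). {i, j, k}) p = T} =
      {(i, j, k). {i, j, k} = T \<and> i \<noteq> j \<and> i \<noteq> k \<and> j \<noteq> k}"
    using \<open>T \<in> ?T\<close> by (intro ordered_triangles_on) blast
  then show "card {p \<in> ?P. (\<lambda>(i, j, k). {i, j, k}) p = T} = 6"
    using card_ordered_triples[OF T(2-4)] unfolding T(1) by simp
qed

lemma sum_adj_triples_eq_six_triangles:
  "(\<Sum>i<n. \<Sum>j<n. \<Sum>k<n. adj E i j * adj E i k * adj E j k) = 6 * real (num_triangles n E)"
proof -
  let ?P = "{(i, j, k). {i, j} \<in> E \<and> {i, k} \<in> E \<and> {j, k} \<in> E}"
  have "(\<Sum>i<n. \<Sum>j<n. \<Sum>k<n. adj E i j * adj E i k * adj E j k) =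
      (\<Sum>p\<in>{..<n} \<times> {..<n} \<times> {..<n}. of_bool (p \<in> ?P))"
    unfolding adj_def sum.cartesian_product by (intro sum.cong refl) auto
  also have "\<dots> = real (card ?P)"
    using simple_graph_edgeD[OF simple] by (intro sum_of_bool_mem_eq_card) auto
  finally show ?thesis
    by (simp add: card_ordered_triangles)
qed

end

section \<open>Regular complete multipartite graphs\<close>

definition non_nbrs :: "nat \<Rightarrow> nat set set \<Rightarrow> nat \<Rightarrow> nat set" where
  "non_nbrs n E x = {y. y < n \<and> {x, y} \<notin> E}"

lemma simple_graph_obtain_edge:
  assumes "simple_graph n E" "E \<noteq> {}"
  obtains u v where "{u, v} \<in> E" "u < n" "v < n" "u \<noteq> v"
proof -
  obtain e where "e \<in> E"
    using assms(2) by blast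
  then obtain u v where "e = {u, v}"
    using assms(1) unfolding simple_graph_def by (meson card_2_iff)
  then show ?thesis
    using that simple_graph_edgeD[OF assms(1)] \<open>e \<in> E\<close> by blast
qed

lemma self_in_non_nbrs:
  assumes "simple_graph n E" "x < n"
  shows "x \<in> non_nbrs n E x"
  using assms simple_graph_edgeD(3)[OF assms(1), of x x] unfolding non_nbrs_def by auto

lemma obtain_class_index:
  fixes N :: "nat \<Rightarrow> 'a"
  obtains c where "\<And>x. x < n \<Longrightarrow> c x < card (N ` {..<n})"
    and "\<And>x y. x < n \<Longrightarrow> y < n \<Longrightarrow> c x = c y \<longleftrightarrow> N x = N y"
    and "\<And>i. i < card (N ` {..<n}) \<Longrightarrow> \<exists>z<n. c z = i"
proof -
  obtain h where h: "bij_betw h (N ` {..<n}) {0..<card (N ` {..<n})}"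
    using ex_bij_betw_finite_nat[of "N ` {..<n}"] by blast
  show ?thesis
  proof
    show "h (N x) < card (N ` {..<n})" if "x < n" for x
      using that bij_betw_apply[OF h] by auto
    show "h (N x) = h (N y) \<longleftrightarrow> N x = N y" if "x < n" "y < n" for x y
      using that inj_on_eq_iff[OF bij_betw_imp_inj_on[OF h]] by auto
    show "\<exists>z<n. h (N z) = i" if "i < card (N ` {..<n})" for i
    proof -
      have "i \<in> h ` N ` {..<n}"
        using bij_betw_imp_surj_on[OF h] that by auto
      then show ?thesis
        by auto
    qed
  qed
qed

text \<open>In a complete multipartite graph the part of a vertex is its non-neighbourhood
  (which contains the vertex itself).\<close>
lemma regular_complete_multipartiteI:
  assumes simple: "simple_graph n E" and "E \<noteq> {}"
    and card_non_nbrs: "\<And>x. x < n \<Longrightarrow> card (non_nbrs n E x) = s"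
    and non_nbrs_eq: "\<And>x y. x < n \<Longrightarrow> y < n \<Longrightarrow> {x, y} \<notin> E \<Longrightarrow> non_nbrs n E x = non_nbrs n E y"
  shows "regular_complete_multipartite n E"
proof -
  let ?N = "non_nbrs n E"
  obtain c where c_less: "\<And>x. x < n \<Longrightarrow> c x < card (?N ` {..<n})"
    and c_eq_iff_N: "\<And>x y. x < n \<Longrightarrow> y < n \<Longrightarrow> c x = c y \<longleftrightarrow> ?N x = ?N y"
    and c_onto: "\<And>i. i < card (?N ` {..<n}) \<Longrightarrow> \<exists>z<n. c z = i"
    using obtain_class_index[of n ?N] by blast
  have c_eq_iff: "c x = c y \<longleftrightarrow> {x, y} \<notin> E" if "x < n" "y < n" for x y
  proof -
    have "?N x = ?N y \<Longrightarrow> {x, y} \<notin> E"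
      using self_in_non_nbrs[OF simple \<open>y < n\<close>] unfolding non_nbrs_def by blast
    then show ?thesis
      using c_eq_iff_N[OF that] non_nbrs_eq[OF that] by blast
  qed
  have parts: "card {x. x < n \<and> c x = i} = s" if i: "i < card (?N ` {..<n})" for i
  proof -
    obtain z where "z < n" "c z = i"
      using c_onto[OF i] by blast
    then have "{x. x < n \<and> c x = i} = {x. x < n \<and> c z = c x}"
      by auto
    also have "\<dots> = ?N z"
      using c_eq_iff[OF \<open>z < n\<close>] unfolding non_nbrs_def by auto
    finally show ?thesis
      using card_non_nbrs[OF \<open>z < n\<close>] by simp
  qed
  obtain u v where "{u, v} \<in> E" "u < n" "v < n"
    using simple_graph_obtain_edge[OF simple \<open>E \<noteq> {}\<close>] by blast
  then have "c u \<noteq> c v"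
    using c_eq_iff by simp
  then have "2 \<le> card (?N ` {..<n})"
    using card_mono[of "{..<card (?N ` {..<n})}" "{c u, c v}"] c_less \<open>u < n\<close> \<open>v < n\<close> by simp
  moreover have "1 \<le> s"
    using card_non_nbrs[OF \<open>u < n\<close>] self_in_non_nbrs[OF simple \<open>u < n\<close>]
      card_gt_0_iff[of "?N u"] unfolding non_nbrs_def by auto
  moreover have "x \<noteq> y \<longrightarrow> ({x, y} \<in> E \<longleftrightarrow> c x \<noteq> c y)" if "x < n" "y < n" for x y
    using c_eq_iff[OF that] by simp
  ultimately show ?thesis
    unfolding regular_complete_multipartite_def using c_less parts by blast
qed

section \<open>The least eigenvalue of a graph\<close>

locale nonempty_simple_graph =
  fixes n :: nat and E :: "nat set set"
  assumes simple: "simple_graph n E" and nonempty: "E \<noteq> {}"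
begin

lemma n_pos: "0 < n"
  using simple_graph_obtain_edge[OF simple nonempty] by (metis gr0I not_less_zero)

sublocale sym_01_matrix n "adj E"
  by unfold_locales (auto simp: adj_sym n_pos adj_def)

lemma adj_self: "adj E i i = 0"
  using simple_graph_edgeD(3)[OF simple, of i i] by (auto simp: adj_def)

lemma deg_sum_eq: "deg_sum = 2 * real (card E)"
  unfolding deg_sum_def degree_def using sum_adj_eq_twice_card_edges[OF simple] .

lemma trace_cube_eq: "trace_cube = 6 * real (num_triangles n E)"
  unfolding trace_cube_def using sum_adj_triples_eq_six_triangles[OF simple] .

lemma deg_sum_pos: "0 < deg_sum"
  using nonempty finite_edges[OF simple] unfolding deg_sum_eq by auto

lemma deg_sum_less_square: "deg_sum < n\<^sup>2"
proof -
  have "degree i \<le> real n - 1" if "i < n" for i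
  proof -
    have "degree i \<le> (\<Sum>j<n. 1 - of_bool (j = i))"
      unfolding degree_def using adj_self by (intro sum_mono) (auto simp: adj_def)
    also have "\<dots> = real n - 1"
      using that by (simp add: sum_subtractf)
    finally show ?thesis .
  qed
  then have "deg_sum \<le> n * (real n - 1)"
    unfolding deg_sum_def using sum_mono[of "{..<n}" degree "\<lambda>_. real n - 1"] by simp
  also have "\<dots> < n\<^sup>2"
    using n_pos by (simp add: power2_eq_square algebra_simps)
  finally show ?thesis .
qed

lemma min_eigenvalue_rayleigh_bound: "min_eigenvalue n E * sqnorm n x \<le> quad_form n (adj E) x"
  unfolding min_eigenvalue_def adj_matrix_eq_mat_adj
  using rayleigh_bound_Min_eigenvalue[of "adj E", OF adj_sym n_pos] .

lemma card_non_nbrs: "x < n \<Longrightarrow> real (card (non_nbrs n E x)) = n - degree x"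
proof -
  have "(\<Sum>k<n. 1 - adj E x k) = (\<Sum>k<n. of_bool (k \<in> non_nbrs n E x))"
    by (intro sum.cong refl) (simp add: adj_def non_nbrs_def)
  also have "\<dots> = real (card (non_nbrs n E x))"
    by (rule sum_of_bool_mem_eq_card) (auto simp: non_nbrs_def)
  finally show "real (card (non_nbrs n E x)) = n - degree x"
    unfolding degree_def by (simp add: sum_subtractf)
qed

lemma same_nbrs_if_common_nbrs_eq_degree:
  assumes regular: "\<And>i. i < n \<Longrightarrow> degree i = r" and "i < n" "j < n" "k < n"
    and common: "(\<Sum>l<n. adj E i l * adj E l j) = r"
  shows "adj E i k = adj E j k"
proof -
  have "(\<Sum>l<n. adj E i l * (1 - adj E l j)) = degree i - (\<Sum>l<n. adj E i l * adj E l j)"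
    unfolding degree_def by (simp add: right_diff_distrib sum_subtractf)
  moreover have "(\<Sum>l<n. (1 - adj E i l) * adj E l j) = degree j - (\<Sum>l<n. adj E i l * adj E l j)"
    unfolding degree_def by (simp add: left_diff_distrib sum_subtractf adj_sym[of E _ j])
  ultimately have "(\<Sum>l<n. adj E i l * (1 - adj E l j)) = 0" "(\<Sum>l<n. (1 - adj E i l) * adj E l j) = 0"
    using common regular \<open>i < n\<close> \<open>j < n\<close> by simp_all
  moreover have "0 \<le> adj E i l * (1 - adj E l j)" "0 \<le> (1 - adj E i l) * adj E l j" for l
    by (simp_all add: adj_def)
  ultimately have "adj E i k * (1 - adj E k j) = 0" "(1 - adj E i k) * adj E k j = 0"
    using \<open>k < n\<close> by (simp_all add: sum_nonneg_eq_0_iff)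
  then show ?thesis
    unfolding adj_def of_bool_def by (auto simp: insert_commute split: if_splits)
qed

lemma regular_complete_multipartite_if_square_relation:
  assumes regular: "\<And>i. i < n \<Longrightarrow> degree i = r"
    and square: "\<And>i j. i < n \<Longrightarrow> j < n \<Longrightarrow> (\<Sum>k<n. adj E i k * adj E k j) = \<mu> * adj E i j + c"
  shows "regular_complete_multipartite n E"
proof (rule regular_complete_multipartiteI[OF simple nonempty])
  have "(\<Sum>k<n. adj E 0 k * adj E k 0) = degree 0"
    unfolding degree_def by (simp add: adj_sym[of E _ 0] zero_one)
  then have "c = r"
    using square[OF n_pos n_pos] regular[OF n_pos] adj_self[of 0] by simp
  show "non_nbrs n E x = non_nbrs n E y" if "x < n" "y < n" "{x, y} \<notin> E" for x y
  proof -
    have "(\<Sum>l<n. adj E x l * adj E l y) = r"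
      using square[OF \<open>x < n\<close> \<open>y < n\<close>] \<open>{x, y} \<notin> E\<close> \<open>c = r\<close> by (simp add: adj_def)
    then have "adj E x k = adj E y k" if "k < n" for k
      using same_nbrs_if_common_nbrs_eq_degree[OF regular \<open>x < n\<close> \<open>y < n\<close> that] by blast
    then show ?thesis
      unfolding non_nbrs_def adj_def of_bool_eq_iff by auto
  qed
  show "card (non_nbrs n E x) = card (non_nbrs n E 0)" if "x < n" for x
    using card_non_nbrs[OF that] card_non_nbrs[OF n_pos] regular[OF that] regular[OF n_pos] by simp
qed

lemma square_relation_if_regular_complete_multipartite:
  assumes "regular_complete_multipartite n E"
  obtains s :: real where "0 \<le> s"
    and "\<And>i. i < n \<Longrightarrow> degree i = real n - s"
    and "\<And>i j. i < n \<Longrightarrow> j < n \<Longrightarrow> (\<Sum>k<n. adj E i k * adj E k j) = (real n - s) - s * adj E i j"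
proof -
  obtain k s and c :: "nat \<Rightarrow> nat" where c_less: "\<forall>x<n. c x < k"
    and parts: "\<forall>i<k. card {x. x < n \<and> c x = i} = s"
    and edges: "\<forall>x<n. \<forall>y<n. x \<noteq> y \<longrightarrow> ({x, y} \<in> E \<longleftrightarrow> c x \<noteq> c y)"
    using assms unfolding regular_complete_multipartite_def by (elim exE conjE) blast
  have adj_c: "adj E i j = 1 - of_bool (c i = c j)" if "i < n" "j < n" for i j
    using edges that adj_self[of i] by (cases "i = j") (auto simp: adj_def)
  have part: "(\<Sum>l<n. of_bool (c l = c i)) = real s" if "i < n" for i
  proof -
    have "(\<Sum>l<n. of_bool (c l = c i)) = real (card ({..<n} \<inter> {l. c l = c i}))"
      by (rule sum_of_bool_eq) simp_all
    also have "{..<n} \<inter> {l. c l = c i} = {l. l < n \<and> c l = c i}"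
      by auto
    finally show ?thesis
      using parts c_less that by simp
  qed
  show ?thesis
  proof
    show "0 \<le> real s" by simp
    show "degree i = real n - real s" if "i < n" for i
    proof -
      have "degree i = (\<Sum>l<n. 1 - of_bool (c l = c i))"
        unfolding degree_def using that by (intro sum.cong refl) (auto simp: adj_c)
      then show ?thesis
        using part[OF that] by (simp add: sum_subtractf)
    qed
    fix i j assume "i < n" "j < n"
    have "(\<Sum>l<n. adj E i l * adj E l j) = (\<Sum>l<n. 1 - of_bool (c l = c i) - of_bool (c l = c j)
        + of_bool (c i = c j) * of_bool (c l = c i))"
      using \<open>i < n\<close> \<open>j < n\<close> by (intro sum.cong refl) (auto simp: adj_c)
    also have "\<dots> = real n - real s - real s + of_bool (c i = c j) * real s"
      using part \<open>i < n\<close> \<open>j < n\<close> by (simp add: sum.distrib sum_subtractf sum_distrib_left[symmetric])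
    also have "\<dots> = (real n - real s) - real s * adj E i j"
      using \<open>i < n\<close> \<open>j < n\<close> by (simp add: adj_c algebra_simps)
    finally show "(\<Sum>l<n. adj E i l * adj E l j) = (real n - real s) - real s * adj E i j" .
  qed
qed

lemma min_eigenvalue_if_square_relation:
  assumes regular: "\<And>i. i < n \<Longrightarrow> degree i = r" and "0 \<le> r" "0 \<le> s"
    and square: "\<And>i j. i < n \<Longrightarrow> j < n \<Longrightarrow> (\<Sum>k<n. adj E i k * adj E k j) = c - s * adj E i j"
  shows "min_eigenvalue n E = - s"
proof -
  obtain u v where "{u, v} \<in> E" "u < n" "v < n"
    using simple_graph_obtain_edge[OF simple nonempty] by blast
  then have "adj E v u = 1"
    by (simp add: adj_def insert_commute)
  (* The difference of two columns of A is an eigenvector for -s: the constant part of A^2 cancels. *)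
  define z where "z k = adj E k u - adj E k v" for k
  have "(\<Sum>k<n. adj E i k * z k) = - s * z i" if "i < n" for i
    using square[OF that \<open>u < n\<close>] square[OF that \<open>v < n\<close>]
    unfolding z_def by (simp add: right_diff_distrib sum_subtractf algebra_simps)
  moreover have "z v \<noteq> 0"
    using \<open>adj E v u = 1\<close> adj_self[of v] unfolding z_def by simp
  ultimately have "eigenvalue (adj_matrix n E) (- s)"
    unfolding adj_matrix_eq_mat_adj eigenvalue_mat_iff using \<open>v < n\<close> by blast
  moreover have "- s \<le> \<nu>" if ev: "eigenvalue (adj_matrix n E) \<nu>" for \<nu>
  proof -
    obtain x where "\<exists>i<n. x i \<noteq> 0" "\<And>i. i < n \<Longrightarrow> (\<Sum>j<n. adj E i j * x j) = \<nu> * x i"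
      using ev unfolding adj_matrix_eq_mat_adj eigenvalue_mat_iff by blast
    then have "\<nu> = r \<or> \<nu> = 0 \<or> \<nu> = - s"
      using eigenvalue_cases_if_square_relation[OF regular square] by blast
    then show ?thesis
      using \<open>0 \<le> r\<close> \<open>0 \<le> s\<close> by auto
  qed
  moreover have "finite {\<nu>. eigenvalue (adj_matrix n E) \<nu>}"
    by (rule finite_eigenvalues[of _ n]) (simp add: adj_matrix_def)
  ultimately show ?thesis
    unfolding min_eigenvalue_def by (intro Min_eqI) auto
qed

lemma defect_min_eigenvalue_nonneg: "0 \<le> defect (min_eigenvalue n E)"
  using defect_nonneg min_eigenvalue_rayleigh_bound by blast

lemma defect_min_eigenvalue_eq_0_iff:
  "defect (min_eigenvalue n E) = 0 \<longleftrightarrow> regular_complete_multipartite n E"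
proof
  assume "defect (min_eigenvalue n E) = 0"
  note regular_square = defect_eq_0_imp_regular_square[OF min_eigenvalue_rayleigh_bound deg_sum_pos this]
  show "regular_complete_multipartite n E"
    by (rule regular_complete_multipartite_if_square_relation[OF regular_square])
next
  assume rcm: "regular_complete_multipartite n E"
  obtain s where "0 \<le> s" and regular: "\<And>i. i < n \<Longrightarrow> degree i = real n - s"
    and square: "\<And>i j. i < n \<Longrightarrow> j < n \<Longrightarrow> (\<Sum>k<n. adj E i k * adj E k j) = (real n - s) - s * adj E i j"
    using square_relation_if_regular_complete_multipartite[OF rcm] by blast
  have "0 \<le> real n - s"
    using regular[OF n_pos] unfolding degree_def by (simp add: sum_nonneg adj_def)
  then have "min_eigenvalue n E = - s"
    using min_eigenvalue_if_square_relation[OF regular _ \<open>0 \<le> s\<close> square] by simp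
  then show "defect (min_eigenvalue n E) = 0"
    using defect_eq_0_if_square_relation[OF regular square] by simp
qed

lemma min_eigenvalue_triangle_bound:
  "min_eigenvalue n E \<le>
      (3 * real n ^ 3 * real (num_triangles n E) - 4 * real (card E) ^ 3)
      / (real n * real (card E) * (real n ^ 2 - 2 * real (card E)))
    \<and> (min_eigenvalue n E =
      (3 * real n ^ 3 * real (num_triangles n E) - 4 * real (card E) ^ 3)
      / (real n * real (card E) * (real n ^ 2 - 2 * real (card E)))
    \<longleftrightarrow> regular_complete_multipartite n E)"
proof -
  define m where "m = real (card E)"
  define \<mu> where "\<mu> = min_eigenvalue n E"
  define F where "F = (3 * real n ^ 3 * real (num_triangles n E) - 4 * m ^ 3) / (n * m * (n\<^sup>2 - 2 * m))"
  define K where "K = 2 * m * (n\<^sup>2 - 2 * m) / n\<^sup>2"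
  have "0 < m" "2 * m < n\<^sup>2"
    using nonempty finite_edges[OF simple] deg_sum_less_square unfolding m_def deg_sum_eq by auto
  then have "0 < K"
    unfolding K_def using n_pos by simp
  have "defect \<mu> = K * (F - \<mu>)"
    unfolding defect_def deg_sum_eq trace_cube_eq K_def F_def m_def[symmetric]
    using n_pos \<open>0 < m\<close> \<open>2 * m < n\<^sup>2\<close> by (simp add: field_simps power2_eq_square power3_eq_cube)
  then show ?thesis
    using defect_min_eigenvalue_nonneg defect_min_eigenvalue_eq_0_iff \<open>0 < K\<close>
    unfolding \<mu>_def[symmetric] F_def m_def[symmetric] by (auto simp: zero_le_mult_iff)
qed

end

theorem theorem3:
  fixes n :: nat and Eg :: "nat set set"
  assumes "simple_graph n Eg" and "card Eg \<ge> 1"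
  shows "min_eigenvalue n Eg \<le>
           (3 * real n ^ 3 * real (num_triangles n Eg) - 4 * real (card Eg) ^ 3)
           / (real n * real (card Eg) * (real n ^ 2 - 2 * real (card Eg)))
    \<and> (min_eigenvalue n Eg =
           (3 * real n ^ 3 * real (num_triangles n Eg) - 4 * real (card Eg) ^ 3)
           / (real n * real (card Eg) * (real n ^ 2 - 2 * real (card Eg)))
       \<longleftrightarrow> regular_complete_multipartite n Eg)"
proof -
  have "nonempty_simple_graph n Eg"
    using assms by unfold_locales auto
  then show ?thesis
    by (rule nonempty_simple_graph.min_eigenvalue_triangle_bound)
qed

end
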